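(* Let $H$ be a finite abelian group of odd order $d$, where $d$ has no divisor congruent to $3\bmod 4$, and let $\lambda:H\times H\to\mathbb{Q}/\mathbb{Z}$ be a non-degenerate symmetric bilinear form. Let $\Lambda_0=\{g\in H:\lambda(g,g)=0\}$. Then $\Lambda_0=\{0\}$ if and only if $H\cong\mathbb{Z}_{q'}\oplus\mathbb{Z}_q$, where $q'$ is a product of distinct primes $p_i\equiv 1\pmod 4$ and $q\mid q'$, and for each prime $p_i\mid q$ there is a basis $(g_1,g_2)$ of the $p_i$-Sylow subgroup $\mathbb{Z}_{p_i}\oplus\mathbb{Z}_{p_i}$ of $H$ such that, identifying $\frac1{p_i}\mathbb{Z}/\mathbb{Z}\subset\mathbb{Q}/\mathbb{Z}$ with $\mathbb{Z}_{p_i}$, one has $\lambda(e_1g_1+e_2g_2,\,e_1g_1+e_2g_2)=e_1^2+\beta e_2^2$ for all $e_1,e_2\in\mathbb{Z}$, where $\beta$ is not a quadratic residue modulo $p_i$.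
   Context: $\mathbb{Z}_n=\mathbb{Z}/n\mathbb{Z}$. The $p$-Sylow subgroup of a finite abelian group is its subgroup of elements of $p$-power order. *)

theory Defs
  imports "HOL-Algebra.Algebra" "HOL-Number_Theory.Number_Theory" "HOL-Computational_Algebra.Squarefree"
begin

text \<open>A Q/Z-valued pairing is represented by a rat-valued function; two values are
equal in Q/Z iff their difference is an integer.\<close>

definition sym_bilinear_QZ :: "('a, 'b) monoid_scheme \<Rightarrow> ('a \<Rightarrow> 'a \<Rightarrow> rat) \<Rightarrow> bool" where
  "sym_bilinear_QZ G lam \<longleftrightarrow>
     (\<forall>x\<in>carrier G. \<forall>y\<in>carrier G. lam x y - lam y x \<in> \<int>) \<and>
     (\<forall>x\<in>carrier G. \<forall>y\<in>carrier G. \<forall>z\<in>carrier G.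
        lam (x \<otimes>\<^bsub>G\<^esub> y) z - (lam x z + lam y z) \<in> \<int>)"

definition nondegenerate_QZ :: "('a, 'b) monoid_scheme \<Rightarrow> ('a \<Rightarrow> 'a \<Rightarrow> rat) \<Rightarrow> bool" where
  "nondegenerate_QZ G lam \<longleftrightarrow>
     (\<forall>x\<in>carrier G. (\<forall>y\<in>carrier G. lam x y \<in> \<int>) \<longrightarrow> x = \<one>\<^bsub>G\<^esub>)"

definition isotropic_set :: "('a, 'b) monoid_scheme \<Rightarrow> ('a \<Rightarrow> 'a \<Rightarrow> rat) \<Rightarrow> 'a set" where
  "isotropic_set G lam = {g \<in> carrier G. lam g g \<in> \<int>}"

definition sylow_part :: "('a, 'b) monoid_scheme \<Rightarrow> nat \<Rightarrow> 'a set" where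
  "sylow_part G p = {x \<in> carrier G. \<exists>k::nat. x [^]\<^bsub>G\<^esub> (p ^ k) = \<one>\<^bsub>G\<^esub>}"

definition is_basis2 :: "('a, 'b) monoid_scheme \<Rightarrow> nat \<Rightarrow> 'a set \<Rightarrow> 'a \<Rightarrow> 'a \<Rightarrow> bool" where
  "is_basis2 G p P g1 g2 \<longleftrightarrow> g1 \<in> P \<and> g2 \<in> P \<and>
     bij_betw (\<lambda>(e1, e2). g1 [^]\<^bsub>G\<^esub> e1 \<otimes>\<^bsub>G\<^esub> g2 [^]\<^bsub>G\<^esub> e2)
       ({0..<p} \<times> {0..<p} :: (nat \<times> nat) set) P"

end

(* Anisotropy controls element orders: lam(x^m, x^m) = m^2 lam(x, x) while ord x * lam(x, x)
   is an integer, so every element order is squarefree, and the numerator of lam(u, u) is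
   prime to ord u, which lets every element be moved into the orthogonal complement of u by
   a power of u.  Over F_p (p odd) a binary diagonal form represents every residue, so three
   pairwise orthogonal elements of order p would yield an isotropic element; hence every
   Sylow subgroup has rank at most 2.  Taking a of maximal order and b of maximal order in
   the orthogonal complement of a, G is the orthogonal sum of <a> and <b>, with ord b dividing
   the squarefree ord a.  On the p-Sylow subgroup of rank 2 the form diagonalises as
   e1^2 + beta e2^2, and since -1 is a square modulo p = 1 (mod 4), anisotropy says exactly
   that beta is a non-residue.
   Conversely, an isotropic element has a power of prime order p.  If p divides q, the
   diagonal form excludes it; otherwise the p-torsion of Z_q' + Z_q is cyclic, so this power
   pairs integrally with all of G, contradicting non-degeneracy. *)

theory Submission
  imports Defs
begin

section \<open>Binary quadratic forms modulo a prime\<close>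

lemma minus_one_square_mod_prime:
  fixes p :: nat
  assumes p: "Factorial_Ring.prime p" and p_mod_4: "[p = 1] (mod 4)"
  obtains i :: int where "[i^2 = -1] (mod int p)"
proof -
  have p_gt_2: "2 < p"
    using prime_ge_2_nat[OF p] p_mod_4 unfolding cong_def by presburger
  have "even ((p - 1) div 2)"
    using p_mod_4 p_gt_2 unfolding cong_def by presburger
  then have "[Legendre (-1) (int p) = 1] (mod int p)"
    using euler_criterion[OF p p_gt_2, of "-1"] neg_one_even_power[where 'a = int] by simp
  moreover have "\<not> [-1 = 0] (mod int p)" "\<not> [-1 = 1] (mod int p)"
    using p_gt_2 by (simp_all add: cong_def zmod_minus1)
  ultimately have "QuadRes (int p) (-1)"
    unfolding Legendre_def by (auto split: if_splits)
  then show ?thesis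
    using that unfolding QuadRes_def by blast
qed

lemma mult_square_mod_prime_inj_on:
  fixes p A :: int
  assumes p: "Factorial_Ring.prime p" and A: "\<not> p dvd A"
  shows "inj_on (\<lambda>x. (A * x^2) mod p) {0..(p - 1) div 2}"
proof (rule inj_onI)
  fix x y assume x: "x \<in> {0..(p - 1) div 2}" and y: "y \<in> {0..(p - 1) div 2}"
    and eq: "(A * x^2) mod p = (A * y^2) mod p"
  have "A * x^2 - A * y^2 = A * ((x - y) * (x + y))"
    by (simp add: algebra_simps power2_eq_square)
  moreover have "p dvd A * x^2 - A * y^2"
    using eq by (simp add: mod_eq_dvd_iff)
  ultimately have "p dvd A * ((x - y) * (x + y))"
    by simp
  then have dvd: "p dvd x - y \<or> p dvd x + y"
    using p A by (simp add: prime_dvd_mult_iff)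
  have "2 * ((p - 1) div 2) \<le> p - 1"
    by simp
  then have "\<bar>x - y\<bar> < p" "0 \<le> x + y" "x + y < p"
    using x y by auto
  from dvd show "x = y"
  proof (elim disjE)
    assume "p dvd x - y"
    then show "x = y"
      using dvd_imp_le_int[of "x - y" p] \<open>\<bar>x - y\<bar> < p\<close> by (cases "x = y") auto
  next
    assume "p dvd x + y"
    then have "x + y = 0"
      using dvd_imp_le_int[of "x + y" p] \<open>0 \<le> x + y\<close> \<open>x + y < p\<close> by (cases "x + y = 0") auto
    then show "x = y"
      using x y by simp
  qed
qed

lemma binary_form_represents_mod_prime:
  fixes p A B c :: int
  assumes p: "Factorial_Ring.prime p" "odd p" and A: "\<not> p dvd A" and B: "\<not> p dvd B"
  obtains x y where "[A * x^2 + B * y^2 = c] (mod p)"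
proof -
  define H where "H = {0..(p - 1) div 2}"
  define S1 where "S1 = (\<lambda>x. (A * x^2) mod p) ` H"
  define S2 where "S2 = (\<lambda>y. (c - B * y^2) mod p) ` H"
  have "inj_on (\<lambda>y. (B * y^2) mod p) H"
    unfolding H_def by (rule mult_square_mod_prime_inj_on[OF p(1) B])
  then have "inj_on ((\<lambda>r. (c - r) mod p) \<circ> (\<lambda>y. (c - B * y^2) mod p)) H"
    by (simp add: comp_def mod_diff_right_eq)
  then have "inj_on (\<lambda>y. (c - B * y^2) mod p) H"
    by (rule inj_on_imageI2)
  then have "card S2 = card H"
    unfolding S2_def by (rule card_image)
  moreover have "card S1 = card H"
    unfolding S1_def H_def using mult_square_mod_prime_inj_on[OF p(1) A] by (rule card_image)
  moreover have "card H = nat ((p - 1) div 2) + 1" "2 * ((p - 1) div 2) = p - 1"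
    using p prime_gt_1_int[OF p(1)] unfolding H_def by auto
  moreover have "card (S1 \<union> S2) \<le> nat p"
    using card_mono[of "{0..<p}" "S1 \<union> S2"] prime_gt_1_int[OF p(1)]
    unfolding S1_def S2_def by fastforce
  moreover have "card S1 + card S2 = card (S1 \<union> S2) + card (S1 \<inter> S2)"
    using card_Un_Int[of S1 S2] unfolding S1_def S2_def H_def by simp
  ultimately have "card (S1 \<inter> S2) \<noteq> 0"
    by linarith
  then have "S1 \<inter> S2 \<noteq> {}"
    by fastforce
  then obtain x y where "(A * x^2) mod p = (c - B * y^2) mod p"
    unfolding S1_def S2_def by auto
  then show ?thesis
    using that[of x y] by (simp add: cong_iff_dvd_diff mod_eq_dvd_iff algebra_simps)
qed

lemma nonresidue_binary_form_anisotropic: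
  fixes p i \<beta> e1 e2 :: int
  assumes p: "Factorial_Ring.prime p" and i: "[i^2 = -1] (mod p)"
    and \<beta>: "\<not> QuadRes p \<beta>" and zero: "[e1^2 + \<beta> * e2^2 = 0] (mod p)"
  shows "p dvd e1 \<and> p dvd e2"
proof -
  have e1_sq: "[e1^2 = - \<beta> * e2^2] (mod p)"
    using zero by (simp add: cong_iff_dvd_diff algebra_simps)
  have "p dvd e2"
  proof (rule ccontr)
    assume "\<not> p dvd e2"
    then have "coprime e2 p"
      using p prime_imp_coprime coprime_commute by blast
    then obtain v where v: "[e2 * v = 1] (mod p)"
      using cong_solve_coprime_int by blast
    have "(i * e1 * v)^2 = i^2 * e1^2 * v^2"
      by (simp add: power_mult_distrib)
    also have "[\<dots> = (-1) * (- \<beta> * e2^2) * v^2] (mod p)"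
      by (intro cong_mult cong_refl i e1_sq)
    also have "(-1) * (- \<beta> * e2^2) * v^2 = \<beta> * (e2 * v)^2"
      by (simp add: power_mult_distrib)
    also have "[\<dots> = \<beta> * 1^2] (mod p)"
      by (intro cong_mult cong_pow cong_refl v)
    finally have "[(i * e1 * v)^2 = \<beta>] (mod p)"
      by simp
    then show False
      using \<beta> unfolding QuadRes_def by blast
  qed
  moreover from this have "p dvd \<beta> * e2^2"
    by (simp add: power2_eq_square)
  then have "p dvd e1^2"
    using zero dvd_add_left_iff by (auto simp: cong_0_iff)
  ultimately show ?thesis
    using p prime_dvd_power by blast
qed

lemma of_int_div_of_nat_in_Ints_iff:
  assumes "p > 0"
  shows "(of_int a / of_nat p :: rat) \<in> \<int> \<longleftrightarrow> int p dvd a"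
  using assms of_int_div_of_int_in_Ints_iff[of a "int p", where 'a = rat] by simp

lemma eq_if_dvd_diff_in_range:
  fixes i j n :: int
  assumes "i \<in> {0..<n}" "j \<in> {0..<n}" "n dvd i - j"
  shows "i = j"
  using assms mod_eq_dvd_iff[of i n j] by simp

lemma prime_torsion_mod_pair:
  fixes i j :: int and p q r :: nat
  assumes p: "Factorial_Ring.prime p" "\<not> p dvd q"
    and range: "i \<in> {0..<int p * int r}" "j \<in> {0..<int q}"
    and torsion: "(int p * i) mod (int p * int r) = 0" "(int p * j) mod int q = 0"
  shows "j = 0 \<and> (\<exists>k \<in> {0..<int p}. i = int r * k)"
proof -
  have "coprime (int q) (int p)"
    using p prime_imp_coprime[of p q] by (simp add: coprime_commute)
  then have "int q dvd j - 0"
    using torsion(2) by (simp add: mod_eq_0_iff_dvd coprime_dvd_mult_right_iff)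
  then have "j = 0"
    using range(2) eq_if_dvd_diff_in_range[of j "int q" 0] by simp
  moreover obtain k where k: "i = int r * k"
    using torsion(1) prime_gt_0_nat[OF p(1)] by (auto simp: mod_eq_0_iff_dvd elim: dvdE)
  moreover have "k \<in> {0..<int p}"
    using range(1) k by (auto simp: zero_le_mult_iff mult.commute[of _ "int r"] mult_less_cancel_left)
  ultimately show ?thesis
    by blast
qed

lemma squarefree_coprime_div_prime:
  fixes n p :: nat
  assumes "squarefree n" "Factorial_Ring.prime p" "p dvd n"
  shows "coprime p (n div p)"
proof -
  obtain r where r: "n = p * r"
    using assms(3) ..
  have "\<not> p * p dvd n"
    using assms(1,2) prime_gt_1_nat[OF assms(2)] by (auto simp: squarefree_def power2_eq_square)
  then have "\<not> p dvd r"
    using r by auto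
  then show ?thesis
    using assms(2) r prime_gt_0_nat[OF assms(2)] by (simp add: prime_imp_coprime)
qed

section \<open>Finite abelian groups\<close>

lemma (in group) int_pow_mod:
  assumes x: "x \<in> carrier G" and n: "x [^] n = \<one>"
  shows "x [^] (k mod int n) = x [^] k"
proof -
  have "int n dvd k - k mod int n"
    by (simp add: minus_mod_eq_mult_div)
  then have "int (ord x) dvd k - k mod int n"
    using n x by (metis dvd_trans of_nat_dvd_iff pow_eq_id)
  then show ?thesis
    using x by (simp add: int_pow_eq)
qed

lemma (in comm_group) subgroup_torsion:
  "subgroup {x \<in> carrier G. x [^] (n::nat) = \<one>} G"
proof
  fix x y assume "x \<in> {x \<in> carrier G. x [^] n = \<one>}" "y \<in> {x \<in> carrier G. x [^] n = \<one>}"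
  then show "x \<otimes> y \<in> {x \<in> carrier G. x [^] n = \<one>}"
    by (simp add: nat_pow_distrib)
next
  fix x assume "x \<in> {x \<in> carrier G. x [^] n = \<one>}"
  then show "inv x \<in> {x \<in> carrier G. x [^] n = \<one>}"
    by (simp add: nat_pow_inv)
qed auto

lemma (in comm_group) inv_int_pow_mult_int_pow:
  "a \<in> carrier G \<Longrightarrow> b \<in> carrier G \<Longrightarrow> inv (a [^] (i::int) \<otimes> b [^] (j::int)) = a [^] (- i) \<otimes> b [^] (- j)"
  by (simp add: inv_mult int_pow_neg m_comm)

lemma (in comm_group) int_pow_mult_int_pow_diff:
  assumes "a \<in> carrier G" "b \<in> carrier G"
  shows "a [^] (i - i') \<otimes> b [^] (j - j') = (a [^] (i::int) \<otimes> b [^] (j::int)) \<otimes> inv (a [^] i' \<otimes> b [^] j')"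
  using assms by (simp add: inv_mult int_pow_neg int_pow_diff int_pow_mult m_ac)

lemma (in comm_group) mult_int_pow_mult_int_pow_eq_oneD:
  assumes "x \<otimes> a [^] (i::int) \<otimes> b [^] (j::int) = \<one>" "x \<in> carrier G" "a \<in> carrier G" "b \<in> carrier G"
  shows "x = a [^] (- i) \<otimes> b [^] (- j)"
proof -
  have "inv (a [^] i \<otimes> b [^] j) = x"
    using assms by (intro inv_equality) (simp_all add: m_assoc)
  then show ?thesis
    using assms(3,4) by (simp add: inv_int_pow_mult_int_pow)
qed

lemma (in comm_group) ord_mult_of_coprime:
  assumes a: "a \<in> carrier G" and b: "b \<in> carrier G" and coprime: "coprime (ord a) (ord b)"
  shows "ord (a \<otimes> b) = ord a * ord b"
proof (rule dvd_antisym)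
  show "ord (a \<otimes> b) dvd ord a * ord b"
    using a b by (simp add: ord_mul_divides m_comm)
  let ?n = "ord (a \<otimes> b)"
  have annihilate: "x [^] (?n * ord y) = \<one>"
    if x: "x \<in> carrier G" and y: "y \<in> carrier G" and xy: "x [^] ?n \<otimes> y [^] ?n = \<one>" for x y
  proof -
    have y_n: "(y [^] ?n) [^] ord y = \<one>"
      by (simp add: y nat_pow_pow pow_eq_id[OF y])
    have "\<one> = (x [^] ?n \<otimes> y [^] ?n) [^] ord y"
      using xy by simp
    also have "\<dots> = (x [^] ?n) [^] ord y \<otimes> (y [^] ?n) [^] ord y"
      using x y by (simp add: nat_pow_distrib)
    finally show ?thesis
      using x y y_n by (simp add: nat_pow_pow)
  qed
  have ab_n: "a [^] ?n \<otimes> b [^] ?n = \<one>"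
    using nat_pow_distrib[OF a b, of ?n] a b by simp
  then have "ord a dvd ?n * ord b"
    using annihilate a b by (simp add: pow_eq_id)
  moreover have "ord b dvd ?n * ord a"
    using annihilate[OF b a] ab_n a b by (simp add: pow_eq_id m_comm)
  ultimately show "ord a * ord b dvd ?n"
    using coprime by (simp add: divides_mult coprime_dvd_mult_left_iff coprime_commute)
qed

lemma (in group) ord_pow_ord_div:
  assumes "finite (carrier G)" "x \<in> carrier G" "p dvd ord x"
  shows "ord (x [^] (ord x div p)) = p"
proof -
  have "0 < ord x"
    using ord_ge_1 assms by fastforce
  then show ?thesis
    using assms ord_pow[of x "ord x div p"] by (auto elim!: dvdE)
qed

lemma (in group) exists_prime_ord_pow:
  assumes "finite (carrier G)" "x \<in> carrier G" "x \<noteq> \<one>"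
  obtains p where "Factorial_Ring.prime p" "p dvd ord x" "ord (x [^] (ord x div p)) = p"
proof -
  have "ord x \<noteq> 1"
    using assms(2,3) ord_eq_1 by metis
  then obtain p where "Factorial_Ring.prime p" "p dvd ord x"
    using prime_factor_nat by blast
  with ord_pow_ord_div[OF assms(1,2)] show ?thesis
    by (intro that)
qed

lemma (in group) ord_eq_prime:
  assumes "Factorial_Ring.prime p" "x \<in> carrier G" "x [^] p = \<one>" "x \<noteq> \<one>"
  shows "ord x = p"
proof -
  have "ord x dvd p"
    using assms(2,3) by (simp add: pow_eq_id)
  moreover have "ord x \<noteq> 1"
    using assms(2,4) ord_eq_1 by blast
  ultimately show ?thesis
    using assms(1) by (auto simp: prime_nat_iff)
qed

lemma (in comm_group) ord_dvd_max_ord: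
  assumes fin: "finite (carrier G)" and H: "subgroup H G"
    and sqf: "\<And>x. x \<in> H \<Longrightarrow> squarefree (ord x)"
    and a: "a \<in> H" and a_max: "\<And>x. x \<in> H \<Longrightarrow> ord x \<le> ord a" and x: "x \<in> H"
  shows "ord x dvd ord a"
proof -
  have xa: "x \<in> carrier G" "a \<in> carrier G"
    using x a subgroup.subset[OF H] by auto
  define g where "g = gcd (ord x) (ord a)"
  define d where "d = ord x div g"
  have ord_x: "ord x = d * g"
    by (simp add: d_def g_def)
  have g_pos: "g > 0"
    using ord_ge_1[OF fin xa(1)] by (simp add: g_def)
  have ord_xg: "ord (x [^] g) = d"
    using ord_pow[OF xa(1), of g] g_pos by (simp add: d_def g_def)
  have "coprime d (ord a)"
  proof (rule coprimeI)
    fix c assume c: "c dvd d" "c dvd ord a"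
    then have "c dvd g"
      unfolding g_def using ord_x dvd_mult2[OF c(1)] by simp
    then have "c * c dvd ord x"
      using c(1) ord_x by (simp add: mult_dvd_mono)
    then show "is_unit c"
      using sqf[OF x] by (simp add: squarefree_def power2_eq_square)
  qed
  then have "ord (a \<otimes> x [^] g) = ord a * d"
    using ord_mult_of_coprime[of a "x [^] g"] xa ord_xg by (simp add: coprime_commute)
  moreover have "x [^] g \<in> H"
    using subgroup_int_pow_closed[OF H x, of "int g"] by (simp add: int_pow_int)
  then have "a \<otimes> x [^] g \<in> H"
    using subgroup.m_closed[OF H a] by blast
  ultimately have "ord a * d \<le> ord a * 1"
    using a_max[of "a \<otimes> x [^] g"] by simp
  then have "d \<le> 1"
    using ord_ge_1[OF fin xa(2)] by simp
  moreover have "d \<noteq> 0"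
    using ord_x ord_ge_1[OF fin xa(1)] by auto
  ultimately have "ord x dvd g"
    using ord_x by (cases d) auto
  then show ?thesis
    by (simp add: g_def)
qed

lemma (in comm_group) exists_ord_multiple_of_all:
  assumes fin: "finite (carrier G)" and H: "subgroup H G"
    and sqf: "\<And>x. x \<in> H \<Longrightarrow> squarefree (ord x)"
  obtains a where "a \<in> H" "\<And>x. x \<in> H \<Longrightarrow> ord x dvd ord a"
proof -
  have fin_ord: "finite (ord ` H)"
    using finite_subset[OF subgroup.subset[OF H] fin] by simp
  moreover have "ord ` H \<noteq> {}"
    using subgroup.one_closed[OF H] by blast
  ultimately have "Max (ord ` H) \<in> ord ` H"
    by (rule Max_in)
  then obtain a where a: "a \<in> H" "ord a = Max (ord ` H)"
    by auto
  then have "ord x \<le> ord a" if "x \<in> H" for x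
    using fin_ord that by simp
  then show ?thesis
    using that a(1) ord_dvd_max_ord[OF fin H sqf a(1)] by blast
qed

lemma (in comm_group) inj_on_int_pow_mult_int_pow:
  assumes a: "a \<in> carrier G" and b: "b \<in> carrier G"
    and indep: "\<And>(i::int) (j::int). a [^] i \<otimes> b [^] j = \<one> \<Longrightarrow> int m dvd i \<and> int n dvd j"
  shows "inj_on (\<lambda>(i, j). a [^] i \<otimes> b [^] j) ({0..<int m} \<times> {0..<int n})"
proof (rule inj_onI)
  fix x y assume x: "x \<in> {0..<int m} \<times> {0..<int n}" and y: "y \<in> {0..<int m} \<times> {0..<int n}"
    and eq: "(\<lambda>(i, j). a [^] i \<otimes> b [^] j) x = (\<lambda>(i, j). a [^] i \<otimes> b [^] j) y"
  obtain i j i' j' where xy: "x = (i, j)" "y = (i', j')"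
    by fastforce
  have "a [^] (i - i') \<otimes> b [^] (j - j') = \<one>"
    using eq a b by (simp add: xy int_pow_mult_int_pow_diff)
  then have "int m dvd i - i'" "int n dvd j - j'"
    using indep by blast+
  then show "x = y"
    using x y by (auto simp: xy intro: eq_if_dvd_diff_in_range)
qed

lemma (in comm_group) iso_DirProd_integer_mod_group:
  assumes fin: "finite (carrier G)" and a: "a \<in> carrier G" and b: "b \<in> carrier G"
    and span: "\<And>x. x \<in> carrier G \<Longrightarrow> \<exists>(i::int) (j::int). x = a [^] i \<otimes> b [^] j"
    and indep: "\<And>(i::int) (j::int). a [^] i \<otimes> b [^] j = \<one> \<Longrightarrow> a [^] i = \<one>"
  shows "G \<cong> integer_mod_group (ord a) \<times>\<times> integer_mod_group (ord b)"
proof -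
  let ?P = "integer_mod_group (ord a) \<times>\<times> integer_mod_group (ord b)"
  define phi where "phi = (\<lambda>(i :: int, j :: int). a [^] i \<otimes> b [^] j)"
  have carrier_P: "carrier ?P = {0..<int (ord a)} \<times> {0..<int (ord b)}"
    using ord_ge_1[OF fin a] ord_ge_1[OF fin b] by (simp add: carrier_integer_mod_group)
  have phi_mod: "phi (i mod int (ord a), j mod int (ord b)) = phi (i, j)" for i j
    using a b by (simp add: phi_def int_pow_mod)
  have "phi \<in> hom ?P G"
  proof (rule homI)
    fix x y assume "x \<in> carrier ?P" "y \<in> carrier ?P"
    obtain i j i' j' where xy: "x = (i, j)" "y = (i', j')"
      by fastforce
    have "phi (x \<otimes>\<^bsub>?P\<^esub> y) = phi (i + i', j + j')"
      using phi_mod by (simp add: xy)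
    also have "\<dots> = phi x \<otimes> phi y"
      using a b by (simp add: phi_def xy int_pow_mult m_ac)
    finally show "phi (x \<otimes>\<^bsub>?P\<^esub> y) = phi x \<otimes> phi y" .
  qed (use a b in \<open>auto simp: phi_def\<close>)
  moreover have "inj_on phi (carrier ?P)"
  proof -
    have "int (ord a) dvd i \<and> int (ord b) dvd j" if "a [^] i \<otimes> b [^] j = \<one>" for i j
      using that indep[OF that] a b by (simp add: int_pow_eq_id)
    then show ?thesis
      unfolding phi_def carrier_P by (rule inj_on_int_pow_mult_int_pow[OF a b])
  qed
  moreover have "phi ` carrier ?P = carrier G"
  proof
    show "phi ` carrier ?P \<subseteq> carrier G"
      using a b by (auto simp: phi_def)
    show "carrier G \<subseteq> phi ` carrier ?P"
    proof
      fix x assume "x \<in> carrier G"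
      then obtain i j where "x = phi (i, j)"
        using span unfolding phi_def by fast
      then have "x = phi (i mod int (ord a), j mod int (ord b))"
        by (simp add: phi_mod)
      moreover have "(i mod int (ord a), j mod int (ord b)) \<in> carrier ?P"
        using carrier_P ord_ge_1[OF fin a] ord_ge_1[OF fin b] by simp
      ultimately show "x \<in> phi ` carrier ?P"
        by blast
    qed
  qed
  ultimately have "?P \<cong> G"
    by (auto simp: is_iso_def iso_def bij_betw_def)
  then show ?thesis
    by (simp add: group.iso_sym DirProd_group)
qed

lemma (in comm_group) is_basis2_sylow_partI:
  assumes p: "0 < p"
    and h: "h1 \<in> carrier G" "h2 \<in> carrier G" "h1 [^] p = \<one>" "h2 [^] p = \<one>"
    and indep: "\<And>(e1::int) (e2::int). h1 [^] e1 \<otimes> h2 [^] e2 = \<one> \<Longrightarrow> int p dvd e1 \<and> int p dvd e2"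
    and span: "\<And>z. z \<in> sylow_part G p \<Longrightarrow> \<exists>(e1::int) (e2::int). z = h1 [^] e1 \<otimes> h2 [^] e2"
  shows "is_basis2 G p (sylow_part G p) h1 h2"
proof -
  let ?A = "{0..<p} \<times> {0..<p} :: (nat \<times> nat) set"
  define f where "f = (\<lambda>(e1::nat, e2::nat). h1 [^] e1 \<otimes> h2 [^] e2)"
  let ?T = "{x \<in> carrier G. x [^] p = \<one>}"
  have T_sylow: "?T \<subseteq> sylow_part G p"
    unfolding sylow_part_def by (auto intro: exI[of _ 1])
  have h_T: "h1 \<in> ?T" "h2 \<in> ?T"
    using h by simp_all
  have pow_T: "x [^] (n::nat) \<in> ?T" if "x \<in> ?T" for x n
    using subgroup_int_pow_closed[OF subgroup_torsion that, of "int n"] by (simp add: int_pow_int)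
  have "f ` ?A \<subseteq> ?T"
    using h_T pow_T subgroup.m_closed[OF subgroup_torsion] by (auto simp: f_def)
  moreover have "sylow_part G p \<subseteq> f ` ?A"
  proof
    fix z assume "z \<in> sylow_part G p"
    then obtain e1 e2 :: int where "z = h1 [^] e1 \<otimes> h2 [^] e2"
      using span by blast
    then have "z = f (nat (e1 mod int p), nat (e2 mod int p))"
      using h p by (simp add: f_def int_pow_mod flip: int_pow_int)
    moreover have "(nat (e1 mod int p), nat (e2 mod int p)) \<in> ?A"
      using p by (simp add: nat_less_iff)
    ultimately show "z \<in> f ` ?A"
      by blast
  qed
  ultimately have image: "f ` ?A = sylow_part G p"
    using T_sylow by blast
  have "inj_on f ?A"
  proof (rule inj_onI)
    fix u v assume u: "u \<in> ?A" and v: "v \<in> ?A" and eq: "f u = f v"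
    obtain e1 e2 e1' e2' where uv: "u = (e1, e2)" "v = (e1', e2')"
      by fastforce
    have "h1 [^] (int e1 - int e1') \<otimes> h2 [^] (int e2 - int e2') = \<one>"
      using eq h by (simp add: f_def uv int_pow_mult_int_pow_diff int_pow_int)
    then have "int p dvd int e1 - int e1'" "int p dvd int e2 - int e2'"
      using indep by blast+
    then have "int e1 = int e1'" "int e2 = int e2'"
      using u v by (auto simp: uv dest!: eq_if_dvd_diff_in_range[rotated 2])
    then show "u = v"
      by (simp add: uv)
  qed
  moreover have "h1 \<in> sylow_part G p" "h2 \<in> sylow_part G p"
    using h_T T_sylow by blast+
  ultimately show ?thesis
    unfolding is_basis2_def bij_betw_def f_def using image f_def by simp
qed

lemma DirProd_nat_pow:
  assumes "monoid G" "monoid H"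
  shows "(g, h) [^]\<^bsub>G \<times>\<times> H\<^esub> (n::nat) = (g [^]\<^bsub>G\<^esub> n, h [^]\<^bsub>H\<^esub> n)"
  by (induction n) simp_all

context comm_group
begin

lemma iso_integer_mod_group_DirProd_nat_pow:
  assumes psi: "psi \<in> iso G (integer_mod_group m \<times>\<times> integer_mod_group n)" and x: "x \<in> carrier G"
  shows "psi (x [^] k) = ((int k * fst (psi x)) mod int m, (int k * snd (psi x)) mod int n)"
proof -
  have "psi (x [^] k) = psi x [^]\<^bsub>integer_mod_group m \<times>\<times> integer_mod_group n\<^esub> k"
    using psi x by (intro hom_nat_pow) (auto simp: iso_def DirProd_group)
  also have "\<dots> = (fst (psi x) [^]\<^bsub>integer_mod_group m\<^esub> k, snd (psi x) [^]\<^bsub>integer_mod_group n\<^esub> k)"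
    by (metis DirProd_nat_pow group.is_monoid group_integer_mod_group prod.collapse)
  finally show ?thesis
    by simp
qed

lemma iso_integer_mod_group_DirProd_one:
  assumes psi: "psi \<in> iso G (integer_mod_group m \<times>\<times> integer_mod_group n)"
  shows "psi \<one> = (0, 0)"
proof -
  have "psi \<in> hom G (integer_mod_group m \<times>\<times> integer_mod_group n)"
    using psi by (simp add: iso_def)
  then show ?thesis
    using hom_one[OF _ is_group DirProd_group[OF group_integer_mod_group group_integer_mod_group]] by simp
qed

lemma pow_eq_one_of_iso_integer_mod_group_DirProd:
  assumes "G \<cong> integer_mod_group q' \<times>\<times> integer_mod_group q" "q dvd q'" "x \<in> carrier G"
  shows "x [^] q' = \<one>"
proof -
  obtain psi where psi: "psi \<in> iso G (integer_mod_group q' \<times>\<times> integer_mod_group q)"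
    using assms(1) unfolding is_iso_def by blast
  have "psi (x [^] q') = psi \<one>"
    using assms(2,3) by (simp add: iso_integer_mod_group_DirProd_nat_pow[OF psi]
        iso_integer_mod_group_DirProd_one[OF psi])
  then show ?thesis
    using psi assms(3) by (auto simp: iso_def bij_betw_def dest: inj_onD)
qed

lemma card_prime_torsion_le:
  assumes iso: "G \<cong> integer_mod_group q' \<times>\<times> integer_mod_group q" and q: "0 < q'" "0 < q"
    and p: "Factorial_Ring.prime p" "p dvd q'" "\<not> p dvd q"
  shows "card {x \<in> carrier G. x [^] p = \<one>} \<le> p"
proof -
  obtain psi where psi: "psi \<in> iso G (integer_mod_group q' \<times>\<times> integer_mod_group q)"
    using iso unfolding is_iso_def by blast
  obtain r where q'_eq: "q' = p * r"
    using p(2) by blast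
  let ?T = "{x \<in> carrier G. x [^] p = \<one>}"
  let ?S = "(\<lambda>k. (int r * k, 0 :: int)) ` {0..<int p}"
  have "psi ` ?T \<subseteq> ?S"
  proof
    fix y assume "y \<in> psi ` ?T"
    then obtain x where x: "x \<in> carrier G" "x [^] p = \<one>" and y: "y = psi x"
      by blast
    obtain i j where ij: "psi x = (i, j)"
      by fastforce
    have "psi x \<in> carrier (integer_mod_group q' \<times>\<times> integer_mod_group q)"
      using psi x(1) by (auto simp: iso_def hom_def)
    moreover have "(int p * i) mod int q' = 0" "(int p * j) mod int q = 0"
      using iso_integer_mod_group_DirProd_nat_pow[OF psi x(1), of p] x(2)
        iso_integer_mod_group_DirProd_one[OF psi] by (simp_all add: ij)
    ultimately have "j = 0 \<and> (\<exists>k \<in> {0..<int p}. i = int r * k)"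
      using q by (intro prime_torsion_mod_pair[OF p(1,3)]) (simp_all add: ij carrier_integer_mod_group q'_eq)
    then show "y \<in> ?S"
      using y ij by auto
  qed
  moreover have "inj_on psi ?T"
    using psi inj_on_subset[of psi "carrier G" ?T] by (simp add: iso_def bij_betw_def)
  ultimately have "card ?T \<le> card ?S"
    using card_image[of psi ?T] card_mono[of ?S "psi ` ?T"] by simp
  also have "\<dots> \<le> p"
    using card_image_le[of "{0..<int p}" "\<lambda>k. (int r * k, 0 :: int)"] by simp
  finally show ?thesis .
qed

lemma prime_torsion_cyclic:
  assumes fin: "finite (carrier G)" and iso: "G \<cong> integer_mod_group q' \<times>\<times> integer_mod_group q"
    and q: "0 < q'" "0 < q" and p: "Factorial_Ring.prime p" "p dvd q'" "\<not> p dvd q"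
    and y: "y \<in> carrier G" "ord y = p" and z: "z \<in> carrier G" "z [^] p = \<one>"
  shows "\<exists>k::nat. z = y [^] k"
proof -
  let ?T = "{x \<in> carrier G. x [^] p = \<one>}"
  have "y \<in> ?T"
    using pow_ord_eq_1[OF y(1)] y by simp
  then have "generate G {y} \<subseteq> ?T"
    using generate_subgroup_incl[OF _ subgroup_torsion] by blast
  moreover have "card ?T \<le> card (generate G {y})"
    using card_prime_torsion_le[OF iso q p] y generate_pow_card[OF y(1)] by simp
  moreover have "finite ?T"
    using fin by simp
  ultimately have "generate G {y} = ?T"
    using card_seteq by blast
  then have "z \<in> {y [^] k | k. k \<in> (UNIV :: nat set)}"
    using z generate_pow_nat[OF y(1)] y(2) prime_gt_0_nat[OF p(1)] by auto
  then show ?thesis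
    by blast
qed

end

section \<open>Symmetric bilinear forms with values in Q/Z\<close>

definition eq_QZ :: "rat \<Rightarrow> rat \<Rightarrow> bool" (infix "=\<^sub>\<int>" 50) where
  "a =\<^sub>\<int> b \<longleftrightarrow> a - b \<in> \<int>"

lemma eq_QZ_refl [simp]: "a =\<^sub>\<int> a"
  by (simp add: eq_QZ_def)

lemma eq_QZ_trans [trans]: "a =\<^sub>\<int> b \<Longrightarrow> b =\<^sub>\<int> c \<Longrightarrow> a =\<^sub>\<int> c"
  unfolding eq_QZ_def using Ints_add[of "a - b" "b - c"] by simp

lemma eq_QZ_add: "a =\<^sub>\<int> b \<Longrightarrow> c =\<^sub>\<int> d \<Longrightarrow> a + c =\<^sub>\<int> b + d"
  unfolding eq_QZ_def by (metis Ints_add add_diff_add)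

lemma eq_QZ_minus: "a =\<^sub>\<int> b \<Longrightarrow> - a =\<^sub>\<int> - b"
  unfolding eq_QZ_def by (metis Ints_minus minus_diff_eq minus_diff_minus)

lemma eq_QZ_mult_of_int: "a =\<^sub>\<int> b \<Longrightarrow> of_int k * a =\<^sub>\<int> of_int k * b"
  unfolding eq_QZ_def by (metis Ints_mult Ints_of_int right_diff_distrib)

lemma eq_QZ_Ints_iff: "a =\<^sub>\<int> b \<Longrightarrow> a \<in> \<int> \<longleftrightarrow> b \<in> \<int>"
  unfolding eq_QZ_def by (metis diff_in_Ints_iff_right diff_in_Ints_iff_left)

lemma eq_QZ_add_Ints: "k \<in> \<int> \<Longrightarrow> a + k =\<^sub>\<int> a"
  by (simp add: eq_QZ_def)

locale QZ_form = comm_group G for G (structure) +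
  fixes lam :: "'a \<Rightarrow> 'a \<Rightarrow> rat"
  assumes sym_bilinear: "sym_bilinear_QZ G lam"
begin

lemma lam_commute: "x \<in> carrier G \<Longrightarrow> y \<in> carrier G \<Longrightarrow> lam x y =\<^sub>\<int> lam y x"
  using sym_bilinear by (simp add: sym_bilinear_QZ_def eq_QZ_def)

lemma lam_mult_left:
  "x \<in> carrier G \<Longrightarrow> y \<in> carrier G \<Longrightarrow> z \<in> carrier G \<Longrightarrow> lam (x \<otimes> y) z =\<^sub>\<int> lam x z + lam y z"
  using sym_bilinear by (simp add: sym_bilinear_QZ_def eq_QZ_def)

lemma lam_mult_right:
  assumes "x \<in> carrier G" "y \<in> carrier G" "z \<in> carrier G"
  shows "lam z (x \<otimes> y) =\<^sub>\<int> lam z x + lam z y"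
proof -
  have "lam z (x \<otimes> y) =\<^sub>\<int> lam (x \<otimes> y) z"
    using assms by (simp add: lam_commute)
  also have "\<dots> =\<^sub>\<int> lam x z + lam y z"
    using assms by (rule lam_mult_left)
  also have "\<dots> =\<^sub>\<int> lam z x + lam z y"
    using assms by (intro eq_QZ_add lam_commute)
  finally show ?thesis .
qed

lemma lam_one_left: "x \<in> carrier G \<Longrightarrow> lam \<one> x \<in> \<int>"
  using lam_mult_left[of \<one> \<one> x] by (simp add: eq_QZ_def)

lemma lam_one_right: "x \<in> carrier G \<Longrightarrow> lam x \<one> \<in> \<int>"
  using lam_one_left eq_QZ_Ints_iff[OF lam_commute] by blast

lemma lam_nat_pow_left:
  assumes "x \<in> carrier G" "z \<in> carrier G"
  shows "lam (x [^] (n::nat)) z =\<^sub>\<int> of_nat n * lam x z"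
proof (induction n)
  case 0
  then show ?case
    using assms lam_one_left by (simp add: eq_QZ_def)
next
  case (Suc n)
  have "lam (x [^] Suc n) z =\<^sub>\<int> lam (x [^] n) z + lam x z"
    using assms by (simp add: lam_mult_left)
  also have "\<dots> =\<^sub>\<int> of_nat n * lam x z + lam x z"
    using Suc by (simp add: eq_QZ_add)
  finally show ?case
    by (simp add: algebra_simps)
qed

lemma lam_inv_left:
  assumes "x \<in> carrier G" "z \<in> carrier G"
  shows "lam (inv x) z =\<^sub>\<int> - lam x z"
proof -
  have "lam (inv x \<otimes> x) z =\<^sub>\<int> lam (inv x) z + lam x z"
    using assms by (intro lam_mult_left) simp_all
  then have "lam (inv x) z + lam x z \<in> \<int>"
    using assms lam_one_left eq_QZ_Ints_iff by auto
  then show ?thesis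
    by (simp add: eq_QZ_def)
qed

lemma lam_int_pow_left:
  assumes x: "x \<in> carrier G" and z: "z \<in> carrier G"
  shows "lam (x [^] (k::int)) z =\<^sub>\<int> of_int k * lam x z"
proof (cases k rule: int_cases2)
  case (nonneg n)
  then show ?thesis
    using lam_nat_pow_left[OF x z, of n] by (simp add: int_pow_int)
next
  case (nonpos n)
  then have "lam (x [^] k) z = lam (inv (x [^] n)) z"
    using x by (simp add: int_pow_neg_int)
  also have "\<dots> =\<^sub>\<int> - lam (x [^] n) z"
    using x z by (simp add: lam_inv_left)
  also have "\<dots> =\<^sub>\<int> - (of_nat n * lam x z)"
    using x z by (intro eq_QZ_minus lam_nat_pow_left)
  also have "\<dots> = of_int k * lam x z"
    using nonpos by simp
  finally show ?thesis .
qed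

lemma lam_int_pow_right:
  assumes "x \<in> carrier G" "z \<in> carrier G"
  shows "lam z (x [^] (k::int)) =\<^sub>\<int> of_int k * lam z x"
proof -
  have "lam z (x [^] k) =\<^sub>\<int> lam (x [^] k) z"
    using assms by (simp add: lam_commute)
  also have "\<dots> =\<^sub>\<int> of_int k * lam x z"
    using assms by (rule lam_int_pow_left)
  also have "\<dots> =\<^sub>\<int> of_int k * lam z x"
    using assms by (intro eq_QZ_mult_of_int lam_commute)
  finally show ?thesis .
qed

lemma lam_int_pow_int_pow:
  assumes "x \<in> carrier G" "y \<in> carrier G"
  shows "lam (x [^] (a::int)) (y [^] (b::int)) =\<^sub>\<int> of_int (a * b) * lam x y"
proof -
  have "lam (x [^] a) (y [^] b) =\<^sub>\<int> of_int a * lam x (y [^] b)"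
    using assms by (simp add: lam_int_pow_left)
  also have "\<dots> =\<^sub>\<int> of_int a * (of_int b * lam x y)"
    using assms by (intro eq_QZ_mult_of_int lam_int_pow_right)
  finally show ?thesis
    by (simp add: mult.assoc)
qed

lemma lam_nat_pow_nat_pow_Ints:
  assumes "x \<in> carrier G" "y \<in> carrier G" "lam x y \<in> \<int>"
  shows "lam (x [^] (m::nat)) (y [^] (n::nat)) \<in> \<int>"
  using eq_QZ_Ints_iff[OF lam_int_pow_int_pow[OF assms(1,2), of "int m" "int n"]] assms(3)
  by (simp add: int_pow_int)

lemma lam_pow_eq_one:
  assumes "x \<in> carrier G" "z \<in> carrier G" "x [^] (n::nat) = \<one>"
  shows "of_nat n * lam x z \<in> \<int>"
  using eq_QZ_Ints_iff[OF lam_nat_pow_left[OF assms(1,2), of n]] assms lam_one_left by simp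

lemma lam_int_pow_mult_left:
  assumes "u \<in> carrier G" "v \<in> carrier G" "w \<in> carrier G"
  shows "lam (u [^] (a::int) \<otimes> v [^] (b::int)) w =\<^sub>\<int> of_int a * lam u w + of_int b * lam v w"
proof -
  have "lam (u [^] a \<otimes> v [^] b) w =\<^sub>\<int> lam (u [^] a) w + lam (v [^] b) w"
    using assms by (simp add: lam_mult_left)
  also have "\<dots> =\<^sub>\<int> of_int a * lam u w + of_int b * lam v w"
    using assms by (intro eq_QZ_add lam_int_pow_left)
  finally show ?thesis .
qed

lemma lam_orthogonal_pair:
  assumes u: "u \<in> carrier G" and v: "v \<in> carrier G" and orth: "lam u v \<in> \<int>"
  shows "lam (u [^] (a::int) \<otimes> v [^] (b::int)) (u [^] (c::int) \<otimes> v [^] (d::int))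
    =\<^sub>\<int> of_int (a * c) * lam u u + of_int (b * d) * lam v v"
proof -
  let ?w = "u [^] c \<otimes> v [^] d"
  have "lam v u \<in> \<int>"
    using orth eq_QZ_Ints_iff[OF lam_commute[OF u v]] by simp
  then have cross: "of_int (a * d) * lam v u + of_int (b * c) * lam u v \<in> \<int>"
    using orth by simp
  have "lam (u [^] a \<otimes> v [^] b) ?w =\<^sub>\<int> of_int a * lam u ?w + of_int b * lam v ?w"
    using u v by (simp add: lam_int_pow_mult_left)
  also have "\<dots> =\<^sub>\<int> of_int a * lam ?w u + of_int b * lam ?w v"
    using u v by (intro eq_QZ_add eq_QZ_mult_of_int lam_commute) simp_all
  also have "\<dots> =\<^sub>\<int> of_int a * (of_int c * lam u u + of_int d * lam v u)
      + of_int b * (of_int c * lam u v + of_int d * lam v v)"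
    using u v by (intro eq_QZ_add eq_QZ_mult_of_int lam_int_pow_mult_left)
  also have "\<dots> = of_int (a * c) * lam u u + of_int (b * d) * lam v v
      + (of_int (a * d) * lam v u + of_int (b * c) * lam u v)"
    by (simp add: algebra_simps)
  also have "\<dots> =\<^sub>\<int> of_int (a * c) * lam u u + of_int (b * d) * lam v v"
    using cross by (intro eq_QZ_add_Ints) (simp add: add.commute)
  finally show ?thesis .
qed

lemma lam_diagonal:
  fixes p :: nat
  assumes u: "u \<in> carrier G" and v: "v \<in> carrier G" and orth: "lam u v \<in> \<int>" and p: "0 < p"
    and uu: "lam u u =\<^sub>\<int> of_int \<alpha> / of_nat p" and vv: "lam v v =\<^sub>\<int> of_int \<beta> / of_nat p"
  shows "lam (u [^] (a::int) \<otimes> v [^] (b::int)) (u [^] (c::int) \<otimes> v [^] (d::int))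
    =\<^sub>\<int> of_int (\<alpha> * a * c + \<beta> * b * d) / of_nat p"
proof -
  have "lam (u [^] a \<otimes> v [^] b) (u [^] c \<otimes> v [^] d) =\<^sub>\<int> of_int (a * c) * lam u u + of_int (b * d) * lam v v"
    using u v orth by (rule lam_orthogonal_pair)
  also have "\<dots> =\<^sub>\<int> of_int (a * c) * (of_int \<alpha> / of_nat p) + of_int (b * d) * (of_int \<beta> / of_nat p)"
    by (intro eq_QZ_add eq_QZ_mult_of_int uu vv)
  also have "\<dots> = of_int (\<alpha> * a * c + \<beta> * b * d) / of_nat p"
    using p by (simp add: field_simps)
  finally show ?thesis .
qed

lemma diagonal_independent:
  fixes p :: nat
  assumes u: "u \<in> carrier G" and v: "v \<in> carrier G" and orth: "lam u v \<in> \<int>" and p: "Factorial_Ring.prime p"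
    and uu: "lam u u =\<^sub>\<int> of_int \<alpha> / of_nat p" and vv: "lam v v =\<^sub>\<int> of_int \<beta> / of_nat p"
    and \<alpha>: "\<not> int p dvd \<alpha>" and \<beta>: "\<not> int p dvd \<beta>" and one: "u [^] (i::int) \<otimes> v [^] (j::int) = \<one>"
  shows "int p dvd i \<and> int p dvd j"
proof -
  have p_pos: "0 < p"
    using prime_gt_0_nat[OF p] .
  have "(of_int (\<alpha> * i * c + \<beta> * j * d) / of_nat p :: rat) \<in> \<int>" for c d :: int
    using lam_diagonal[OF u v orth p_pos uu vv, of i j c d] lam_one_left[of "u [^] c \<otimes> v [^] d"] u v one
    by (simp add: eq_QZ_def)
  from this[of 1 0] this[of 0 1] have "int p dvd \<alpha> * i" "int p dvd \<beta> * j"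
    using of_int_div_of_nat_in_Ints_iff[OF p_pos, of "\<alpha> * i"] of_int_div_of_nat_in_Ints_iff[OF p_pos, of "\<beta> * j"]
    by simp_all
  then show ?thesis
    using p \<alpha> \<beta> by (simp add: prime_dvd_mult_iff)
qed

lemma diagonal_rescale:
  fixes p :: nat and \<alpha>1 \<alpha>2 x y t :: int
  assumes u: "u \<in> carrier G" and v: "v \<in> carrier G" and orth: "lam u v \<in> \<int>" and p: "0 < p"
    and uu: "lam u u =\<^sub>\<int> of_int \<alpha>1 / of_nat p" and vv: "lam v v =\<^sub>\<int> of_int \<alpha>2 / of_nat p"
    and sum: "\<alpha>1 * x * x + \<alpha>2 * y * y = 1 + int p * t"
  shows "lam (u [^] x \<otimes> v [^] y) (u [^] x \<otimes> v [^] y) =\<^sub>\<int> 1 / of_nat p"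
    and "lam (u [^] x \<otimes> v [^] y) (u [^] (- \<alpha>2 * y) \<otimes> v [^] (\<alpha>1 * x)) \<in> \<int>"
    and "lam (u [^] (- \<alpha>2 * y) \<otimes> v [^] (\<alpha>1 * x)) (u [^] (- \<alpha>2 * y) \<otimes> v [^] (\<alpha>1 * x))
      =\<^sub>\<int> of_int (\<alpha>1 * \<alpha>2) / of_nat p"
proof -
  note diag = lam_diagonal[OF u v orth p uu vv]
  have "lam (u [^] x \<otimes> v [^] y) (u [^] x \<otimes> v [^] y) =\<^sub>\<int> of_int (\<alpha>1 * x * x + \<alpha>2 * y * y) / of_nat p"
    by (rule diag)
  also have "\<dots> = 1 / of_nat p + of_int t"
    unfolding sum using p by (simp add: field_simps)
  also have "\<dots> =\<^sub>\<int> 1 / of_nat p"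
    by (simp add: eq_QZ_add_Ints)
  finally show "lam (u [^] x \<otimes> v [^] y) (u [^] x \<otimes> v [^] y) =\<^sub>\<int> 1 / of_nat p" .
  have "lam (u [^] x \<otimes> v [^] y) (u [^] (- \<alpha>2 * y) \<otimes> v [^] (\<alpha>1 * x))
      =\<^sub>\<int> of_int (\<alpha>1 * x * (- \<alpha>2 * y) + \<alpha>2 * y * (\<alpha>1 * x)) / of_nat p"
    by (rule diag)
  then show "lam (u [^] x \<otimes> v [^] y) (u [^] (- \<alpha>2 * y) \<otimes> v [^] (\<alpha>1 * x)) \<in> \<int>"
    by (simp add: eq_QZ_def algebra_simps)
  have rescaled: "\<alpha>1 * (- \<alpha>2 * y) * (- \<alpha>2 * y) + \<alpha>2 * (\<alpha>1 * x) * (\<alpha>1 * x)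
      = \<alpha>1 * \<alpha>2 * (\<alpha>1 * x * x + \<alpha>2 * y * y)"
    by (simp add: algebra_simps)
  have "lam (u [^] (- \<alpha>2 * y) \<otimes> v [^] (\<alpha>1 * x)) (u [^] (- \<alpha>2 * y) \<otimes> v [^] (\<alpha>1 * x))
      =\<^sub>\<int> of_int (\<alpha>1 * (- \<alpha>2 * y) * (- \<alpha>2 * y) + \<alpha>2 * (\<alpha>1 * x) * (\<alpha>1 * x)) / of_nat p"
    by (rule diag)
  also have "\<dots> = of_int (\<alpha>1 * \<alpha>2) / of_nat p + of_int (\<alpha>1 * \<alpha>2 * t)"
    unfolding rescaled sum using p by (simp add: field_simps)
  also have "\<dots> =\<^sub>\<int> of_int (\<alpha>1 * \<alpha>2) / of_nat p"
    by (simp add: eq_QZ_add_Ints)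
  finally show "lam (u [^] (- \<alpha>2 * y) \<otimes> v [^] (\<alpha>1 * x)) (u [^] (- \<alpha>2 * y) \<otimes> v [^] (\<alpha>1 * x))
      =\<^sub>\<int> of_int (\<alpha>1 * \<alpha>2) / of_nat p" .
qed

definition orth :: "'a \<Rightarrow> 'a set" where
  "orth a = {x \<in> carrier G. lam a x \<in> \<int>}"

lemma lam_nat_pow_left_Ints:
  assumes "x \<in> carrier G" "y \<in> carrier G" "lam x y \<in> \<int>"
  shows "lam (x [^] (n::nat)) y \<in> \<int>"
  using eq_QZ_Ints_iff[OF lam_nat_pow_left[OF assms(1,2)]] assms(3) by simp

lemma subgroup_orth:
  assumes a: "a \<in> carrier G"
  shows "subgroup (orth a) G"
proof
  show "orth a \<subseteq> carrier G"
    by (auto simp: orth_def)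
  show "\<one> \<in> orth a"
    using a lam_one_right by (simp add: orth_def)
next
  fix x y assume "x \<in> orth a" "y \<in> orth a"
  then show "x \<otimes> y \<in> orth a"
    using a eq_QZ_Ints_iff[OF lam_mult_right[of x y a]] by (simp add: orth_def)
next
  fix x assume "x \<in> orth a"
  then show "inv x \<in> orth a"
    using a eq_QZ_Ints_iff[OF lam_int_pow_right[of x a "-1"]] int_pow_neg_int[of x 1]
    by (simp add: orth_def)
qed

lemma orth_int_pow_closed: "a \<in> carrier G \<Longrightarrow> x \<in> orth a \<Longrightarrow> x [^] (k::int) \<in> orth a"
  by (rule subgroup_int_pow_closed[OF subgroup_orth])

lemma orth_nat_pow_closed: "a \<in> carrier G \<Longrightarrow> x \<in> orth a \<Longrightarrow> x [^] (n::nat) \<in> orth a"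
  using orth_int_pow_closed[of a x "int n"] by (simp add: int_pow_int)

end

definition nonresidue_diagonal_basis :: "('a, 'b) monoid_scheme \<Rightarrow> ('a \<Rightarrow> 'a \<Rightarrow> rat) \<Rightarrow> nat \<Rightarrow> bool" where
  "nonresidue_diagonal_basis G lam p \<longleftrightarrow>
     (\<exists>g1 g2 (\<beta>::int). is_basis2 G p (sylow_part G p) g1 g2 \<and>
        \<not> QuadRes (int p) \<beta> \<and>
        (\<forall>e1 e2 :: int.
           lam (g1 [^]\<^bsub>G\<^esub> e1 \<otimes>\<^bsub>G\<^esub> g2 [^]\<^bsub>G\<^esub> e2)
               (g1 [^]\<^bsub>G\<^esub> e1 \<otimes>\<^bsub>G\<^esub> g2 [^]\<^bsub>G\<^esub> e2)
           - of_int (e1^2 + \<beta> * e2^2) / of_nat p \<in> \<int>))"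

definition anisotropic_normal_form :: "('a, 'b) monoid_scheme \<Rightarrow> ('a \<Rightarrow> 'a \<Rightarrow> rat) \<Rightarrow> bool" where
  "anisotropic_normal_form G lam \<longleftrightarrow>
    (\<exists>q' q :: nat.
       q' > 0 \<and> squarefree q' \<and> (\<forall>p. Factorial_Ring.prime p \<and> p dvd q' \<longrightarrow> [p = 1] (mod 4)) \<and>
       q dvd q' \<and>
       G \<cong> (integer_mod_group q' \<times>\<times> integer_mod_group q) \<and>
       (\<forall>p::nat. Factorial_Ring.prime p \<and> p dvd q \<longrightarrow> nonresidue_diagonal_basis G lam p))"

section \<open>Anisotropic forms\<close>

locale anisotropic_QZ_form = QZ_form +
  assumes finite_carrier: "finite (carrier G)"
    and isotropic_trivial: "isotropic_set G lam = {\<one>}"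
begin

lemma anisotropic:
  assumes "x \<in> carrier G" "lam x x \<in> \<int>"
  shows "x = \<one>"
proof -
  have "x \<in> isotropic_set G lam"
    using assms by (simp add: isotropic_set_def)
  then show ?thesis
    using isotropic_trivial by simp
qed

lemma ord_pos: "x \<in> carrier G \<Longrightarrow> 0 < ord x"
  using ord_ge_1[OF finite_carrier, of x] by simp

lemma squarefree_ord:
  assumes x: "x \<in> carrier G"
  shows "squarefree (ord x)"
proof (rule squarefreeI)
  fix d assume "d^2 dvd ord x"
  then obtain k where ord_x: "ord x = d * d * k"
    by (auto simp: power2_eq_square)
  have "lam (x [^] int (d * k)) (x [^] int (d * k)) =\<^sub>\<int> of_int (int (d * k) * int (d * k)) * lam x x"
    by (rule lam_int_pow_int_pow[OF x x])
  also have "\<dots> = of_nat k * (of_nat (ord x) * lam x x)"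
    by (simp add: ord_x)
  finally have eq: "lam (x [^] int (d * k)) (x [^] int (d * k)) =\<^sub>\<int> of_nat k * (of_nat (ord x) * lam x x)" .
  have "of_nat k * (of_nat (ord x) * lam x x) \<in> \<int>"
    using lam_pow_eq_one[OF x x pow_ord_eq_1[OF x]] by simp
  then have "lam (x [^] int (d * k)) (x [^] int (d * k)) \<in> \<int>"
    using eq_QZ_Ints_iff[OF eq] by blast
  then have "x [^] int (d * k) = \<one>"
    by (rule anisotropic[rotated]) (use x in simp)
  then have "x [^] (d * k) = \<one>"
    by (simp only: int_pow_int)
  then have "ord x dvd d * k"
    using x by (simp add: pow_eq_id)
  moreover have "ord x = (d * k) * d"
    using ord_x by (simp add: mult_ac)
  ultimately have "(d * k) * d dvd (d * k) * 1"
    by simp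
  moreover have "0 < d * k"
    using ord_pos[OF x] ord_x by auto
  ultimately show "d dvd 1"
    using nat_mult_dvd_cancel1 by blast
qed

lemma sylow_part_eq:
  assumes p: "Factorial_Ring.prime p"
  shows "sylow_part G p = {x \<in> carrier G. x [^] p = \<one>}"
proof (intro equalityI subsetI)
  fix x assume "x \<in> sylow_part G p"
  then obtain k where x: "x \<in> carrier G" "x [^] (p ^ k) = \<one>"
    by (auto simp: sylow_part_def)
  then have "ord x dvd p ^ k"
    by (simp add: pow_eq_id)
  then obtain j where "ord x = p ^ j"
    using divides_primepow_nat[OF p] by blast
  moreover have "\<not> is_unit p"
    using prime_gt_1_nat[OF p] by simp
  ultimately have "ord x dvd p"
    using squarefree_ord[OF x(1)] by (auto simp: squarefree_power_iff)
  then show "x \<in> {x \<in> carrier G. x [^] p = \<one>}"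
    using x by (simp add: pow_eq_id)
next
  fix x assume "x \<in> {x \<in> carrier G. x [^] p = \<one>}"
  then show "x \<in> sylow_part G p"
    unfolding sylow_part_def by (auto intro: exI[of _ 1])
qed

(* The reduced denominator of lam u u is all of ord u: a common factor g of numerator and
   denominator would make the proper power u^(ord u / g) isotropic. *)

lemma lam_self_eq_fraction:
  assumes u: "u \<in> carrier G"
  obtains \<alpha> where "lam u u = of_int \<alpha> / of_nat (ord u)" "coprime \<alpha> (int (ord u))"
proof -
  let ?N = "int (ord u)"
  have N_pos: "?N > 0"
    using ord_pos[OF u] by simp
  obtain \<alpha> where \<alpha>: "of_nat (ord u) * lam u u = of_int \<alpha>"
    using lam_pow_eq_one[OF u u pow_ord_eq_1[OF u]] by (auto elim: Ints_cases)
  then have lam_uu: "lam u u = of_int \<alpha> / of_nat (ord u)"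
    using N_pos by (simp add: field_simps)
  define g where "g = gcd \<alpha> ?N"
  define m where "m = ?N div g"
  have g_pos: "g > 0"
    using N_pos by (simp add: g_def)
  have N_eq: "?N = g * m"
    by (simp add: m_def g_def)
  then have m_pos: "m > 0"
    using N_pos g_pos by (simp add: zero_less_mult_iff)
  obtain \<alpha>' where \<alpha>': "\<alpha> = g * \<alpha>'"
    unfolding g_def by (rule dvdE[OF gcd_dvd1])
  have "lam (u [^] m) (u [^] m) =\<^sub>\<int> of_int (m * m) * lam u u"
    by (rule lam_int_pow_int_pow[OF u u])
  also have "\<dots> = of_int (m * m) * (of_int (g * \<alpha>') / of_int (g * m))"
    by (simp add: lam_uu \<alpha>' N_eq flip: N_eq)
  also have "\<dots> = of_int (m * \<alpha>')"
    using g_pos m_pos by (simp add: field_simps)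
  finally have "lam (u [^] m) (u [^] m) \<in> \<int>"
    by (simp add: eq_QZ_def)
  then have "u [^] m = \<one>"
    by (rule anisotropic[rotated]) (use u in simp)
  then have "?N \<le> m"
    using u m_pos by (simp add: int_pow_eq_id zdvd_imp_le)
  then have "g = 1"
    using N_eq m_pos g_pos by (simp add: mult_le_cancel_right1)
  then have "coprime \<alpha> ?N"
    by (simp add: g_def coprime_iff_gcd_eq_1)
  with lam_uu show ?thesis
    by (rule that)
qed

lemma lam_self_prime_ord:
  assumes "u \<in> carrier G" "ord u = p" "Factorial_Ring.prime p"
  obtains \<alpha> where "lam u u = of_int \<alpha> / of_nat p" "\<not> int p dvd \<alpha>"
proof -
  obtain \<alpha> where "lam u u = of_int \<alpha> / of_nat p" "coprime \<alpha> (int p)"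
    using lam_self_eq_fraction assms by metis
  moreover have "\<not> is_unit (int p)"
    using prime_gt_1_nat[OF assms(3)] by simp
  ultimately show ?thesis
    using that coprime_common_divisor[of \<alpha> "int p" "int p"] by auto
qed

lemma exists_pow_mult_in_orth:
  assumes u: "u \<in> carrier G" and x: "x \<in> carrier G"
  obtains i :: int where "x \<otimes> u [^] i \<in> orth u"
proof -
  let ?N = "int (ord u)"
  have N_pos: "0 < ord u"
    using ord_pos[OF u] .
  obtain \<alpha> where lam_uu: "lam u u = of_int \<alpha> / of_nat (ord u)" and "coprime \<alpha> ?N"
    using lam_self_eq_fraction[OF u] .
  then obtain v where v: "[\<alpha> * v = 1] (mod ?N)"
    using cong_solve_coprime_int by blast
  obtain \<kappa> where \<kappa>: "of_nat (ord u) * lam u x = of_int \<kappa>"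
    using lam_pow_eq_one[OF u x pow_ord_eq_1[OF u]] by (auto elim: Ints_cases)
  define i where "i = - \<kappa> * v"
  have "?N dvd \<kappa> * (1 - \<alpha> * v)"
    using v by (simp add: cong_iff_dvd_diff dvd_diff_commute)
  then have "(of_int (\<kappa> + i * \<alpha>) / of_nat (ord u) :: rat) \<in> \<int>"
    using of_int_div_of_nat_in_Ints_iff[OF N_pos, of "\<kappa> + i * \<alpha>"] by (simp add: i_def algebra_simps)
  moreover have eq: "lam u (x \<otimes> u [^] i) =\<^sub>\<int> lam u x + of_int i * lam u u"
  proof -
    have "lam u (x \<otimes> u [^] i) =\<^sub>\<int> lam u x + lam u (u [^] i)"
      using u x by (intro lam_mult_right) simp_all
    also have "\<dots> =\<^sub>\<int> lam u x + of_int i * lam u u"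
      using u by (intro eq_QZ_add eq_QZ_refl lam_int_pow_right)
    finally show ?thesis .
  qed
  moreover have "lam u x + of_int i * lam u u = of_int (\<kappa> + i * \<alpha>) / of_nat (ord u)"
    using N_pos \<kappa> by (simp add: lam_uu field_simps)
  ultimately have "x \<otimes> u [^] i \<in> orth u"
    using u x eq_QZ_Ints_iff[OF eq] by (simp add: orth_def)
  then show ?thesis
    by (rule that)
qed

lemma no_orthogonal_triple:
  assumes p: "Factorial_Ring.prime p" "odd p"
    and g: "g1 \<in> carrier G" "g2 \<in> carrier G" "g3 \<in> carrier G"
    and ord_g: "ord g1 = p" "ord g2 = p" "ord g3 = p"
    and orth: "lam g1 g2 \<in> \<int>" "lam g1 g3 \<in> \<int>" "lam g2 g3 \<in> \<int>"
  shows False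
proof -
  have p_pos: "0 < p"
    using prime_gt_0_nat[OF p(1)] .
  obtain \<alpha>1 where \<alpha>1: "lam g1 g1 = of_int \<alpha>1 / of_nat p" "\<not> int p dvd \<alpha>1"
    using lam_self_prime_ord[OF g(1) ord_g(1) p(1)] .
  obtain \<alpha>2 where \<alpha>2: "lam g2 g2 = of_int \<alpha>2 / of_nat p" "\<not> int p dvd \<alpha>2"
    using lam_self_prime_ord[OF g(2) ord_g(2) p(1)] .
  obtain \<alpha>3 where \<alpha>3: "lam g3 g3 = of_int \<alpha>3 / of_nat p"
    using lam_self_prime_ord[OF g(3) ord_g(3) p(1)] .
  obtain x y where "[\<alpha>1 * x^2 + \<alpha>2 * y^2 = - \<alpha>3] (mod int p)"
    using binary_form_represents_mod_prime[of "int p" \<alpha>1 \<alpha>2] p \<alpha>1(2) \<alpha>2(2) by auto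
  then have represents: "(of_int (\<alpha>1 * x^2 + \<alpha>2 * y^2 + \<alpha>3) / of_nat p :: rat) \<in> \<int>"
    using of_int_div_of_nat_in_Ints_iff[OF p_pos, of "\<alpha>1 * x^2 + \<alpha>2 * y^2 + \<alpha>3"]
    by (simp add: cong_iff_dvd_diff)
  define w where "w = g1 [^] x \<otimes> g2 [^] y"
  have w: "w \<in> carrier G"
    using g by (simp add: w_def)
  have "lam w g3 =\<^sub>\<int> of_int x * lam g1 g3 + of_int y * lam g2 g3"
    unfolding w_def using g by (rule lam_int_pow_mult_left)
  then have w_g3: "lam w g3 \<in> \<int>"
    using orth by (simp add: eq_QZ_def)
  have "lam (w \<otimes> g3) (w \<otimes> g3) =\<^sub>\<int> lam w w + lam g3 g3"
    using lam_orthogonal_pair[OF w g(3) w_g3, of 1 1 1 1] w g by simp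
  also have "\<dots> =\<^sub>\<int> (of_int (x * x) * lam g1 g1 + of_int (y * y) * lam g2 g2) + lam g3 g3"
    unfolding w_def by (intro eq_QZ_add eq_QZ_refl lam_orthogonal_pair g orth)
  also have "\<dots> = of_int (\<alpha>1 * x^2 + \<alpha>2 * y^2 + \<alpha>3) / of_nat p"
    using p_pos by (simp add: \<alpha>1 \<alpha>2 \<alpha>3 field_simps power2_eq_square)
  finally have "lam (w \<otimes> g3) (w \<otimes> g3) \<in> \<int>"
    using represents by (simp add: eq_QZ_def)
  then have "w \<otimes> g3 = \<one>"
    by (rule anisotropic[rotated]) (use w g in simp)
  then have "g3 \<otimes> w = \<one>"
    using w g by (simp add: m_comm)
  then have "inv w = g3"
    using w g by (intro inv_equality)
  then have "lam g3 g3 =\<^sub>\<int> - lam w g3"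
    using lam_inv_left[OF w g(3)] by simp
  then have "lam g3 g3 \<in> \<int>"
    using w_g3 by (simp add: eq_QZ_def)
  then have "g3 = \<one>"
    using g(3) by (rule anisotropic[rotated])
  then show False
    using ord_g(3) prime_gt_1_nat[OF p(1)] by simp
qed

lemma prime_torsion_spanned:
  assumes p: "Factorial_Ring.prime p" "odd p"
    and h: "h1 \<in> carrier G" "h2 \<in> carrier G" "ord h1 = p" "ord h2 = p" and orth: "lam h1 h2 \<in> \<int>"
    and z: "z \<in> carrier G" "z [^] p = \<one>"
  obtains i j :: int where "z = h1 [^] i \<otimes> h2 [^] j"
proof -
  let ?T = "{x \<in> carrier G. x [^] p = \<one>}"
  have T: "subgroup ?T G"
    by (rule subgroup_torsion)
  have h_T: "h1 \<in> ?T" "h2 \<in> ?T"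
    using pow_ord_eq_1[OF h(1)] pow_ord_eq_1[OF h(2)] h(1,2) by (simp_all only: h(3,4) mem_Collect_eq)
  obtain i :: int where i: "z \<otimes> h1 [^] i \<in> orth h1"
    using exists_pow_mult_in_orth[OF h(1) z(1)] .
  obtain j :: int where j: "z \<otimes> h1 [^] i \<otimes> h2 [^] j \<in> orth h2"
    using exists_pow_mult_in_orth[OF h(2), of "z \<otimes> h1 [^] i"] z h by auto
  let ?c = "z \<otimes> h1 [^] i \<otimes> h2 [^] j"
  have c: "?c \<in> carrier G"
    using z h by simp
  have "h2 [^] j \<in> orth h1"
    using h orth by (intro orth_int_pow_closed) (simp_all add: orth_def)
  then have c_h1: "?c \<in> orth h1"
    using i subgroup.m_closed[OF subgroup_orth[OF h(1)]] by blast
  have "?c \<in> ?T"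
    using z h_T by (intro subgroup.m_closed[OF T] subgroup_int_pow_closed[OF T]) simp_all
  then have "ord ?c dvd p"
    using c by (simp add: pow_eq_id)
  have "?c = \<one>"
  proof (rule ccontr)
    assume "?c \<noteq> \<one>"
    then have "ord ?c \<noteq> 1"
      using c ord_eq_1 by blast
    then have "ord ?c = p"
      using \<open>ord ?c dvd p\<close> p(1) by (auto simp: prime_nat_iff)
    then show False
      using no_orthogonal_triple[OF p h(1,2) c h(3,4)] orth c_h1 j by (simp add: orth_def)
  qed
  then have "z = h1 [^] (- i) \<otimes> h2 [^] (- j)"
    using z h by (intro mult_int_pow_mult_int_pow_eq_oneD) simp_all
  then show ?thesis
    by (rule that)
qed

lemma orth_self_int_pow_trivial:
  assumes a: "a \<in> carrier G" and a_i: "a [^] (i::int) \<in> orth a"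
  shows "a [^] i = \<one>"
proof -
  have "lam (a [^] i) (a [^] i) =\<^sub>\<int> of_int i * lam a (a [^] i)"
    using a by (intro lam_int_pow_left) simp_all
  moreover have "lam a (a [^] i) \<in> \<int>"
    using a_i by (simp add: orth_def)
  ultimately have "lam (a [^] i) (a [^] i) \<in> \<int>"
    by (simp add: eq_QZ_def)
  then show ?thesis
    by (rule anisotropic[rotated]) (use a in simp)
qed

lemma orth_inter_orth_trivial:
  assumes odd_order: "odd (order G)"
    and a: "a \<in> carrier G" "\<And>x. x \<in> carrier G \<Longrightarrow> ord x dvd ord a"
    and b: "b \<in> orth a" "\<And>x. x \<in> orth a \<Longrightarrow> ord x dvd ord b"
    and z: "z \<in> orth a" "z \<in> orth b"
  shows "z = \<one>"
proof (rule ccontr)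
  assume "z \<noteq> \<one>"
  moreover have b_carrier: "b \<in> carrier G" and ab: "lam a b \<in> \<int>" and z_carrier: "z \<in> carrier G"
    using b(1) z by (simp_all add: orth_def)
  ultimately obtain p where p: "Factorial_Ring.prime p" "p dvd ord z" "ord (z [^] (ord z div p)) = p"
    using exists_prime_ord_pow[OF finite_carrier] by blast
  define c where "c = z [^] (ord z div p)"
  have c: "c \<in> orth a" "c \<in> orth b"
    using z a(1) b_carrier by (simp_all add: c_def orth_nat_pow_closed)
  have p_b: "p dvd ord b"
    using b(2)[OF c(1)] p(3) by (simp add: c_def)
  then have p_a: "p dvd ord a"
    using a(2)[OF b_carrier] by (rule dvd_trans)
  have "odd p"
    using p_a ord_dvd_group_order[OF a(1)] odd_order by (meson dvd_trans even_mult_iff dvdE)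
  have "lam (a [^] (ord a div p)) (b [^] (ord b div p)) \<in> \<int>"
    using a(1) b_carrier ab by (rule lam_nat_pow_nat_pow_Ints)
  moreover have "lam (a [^] (ord a div p)) c \<in> \<int>" "lam (b [^] (ord b div p)) c \<in> \<int>"
    using c a(1) b_carrier by (auto simp: orth_def intro!: lam_nat_pow_left_Ints)
  ultimately show False
    using no_orthogonal_triple[OF p(1) \<open>odd p\<close>, of "a [^] (ord a div p)" "b [^] (ord b div p)" c]
      ord_pow_ord_div[OF finite_carrier] a(1) b_carrier p_a p_b p(3) c
    by (simp add: c_def orth_def)
qed

lemma orthogonal_cyclic_decomposition:
  assumes odd_order: "odd (order G)"
  obtains a b where "a \<in> carrier G" "b \<in> carrier G" "lam a b \<in> \<int>" "ord b dvd ord a"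
    "G \<cong> integer_mod_group (ord a) \<times>\<times> integer_mod_group (ord b)"
proof -
  obtain a where a: "a \<in> carrier G" "\<And>x. x \<in> carrier G \<Longrightarrow> ord x dvd ord a"
    using exists_ord_multiple_of_all[OF finite_carrier subgroup_self] squarefree_ord by blast
  have orth_a: "subgroup (orth a) G"
    using subgroup_orth[OF a(1)] .
  obtain b where b: "b \<in> orth a" "\<And>x. x \<in> orth a \<Longrightarrow> ord x dvd ord b"
    using exists_ord_multiple_of_all[OF finite_carrier orth_a] squarefree_ord
    by (auto simp: orth_def)
  have b_carrier: "b \<in> carrier G" and ab: "lam a b \<in> \<int>"
    using b(1) by (simp_all add: orth_def)
  have span: "\<exists>(i::int) (j::int). x = a [^] i \<otimes> b [^] j" if x: "x \<in> carrier G" for x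
  proof -
    obtain i :: int where i: "x \<otimes> a [^] i \<in> orth a"
      using exists_pow_mult_in_orth[OF a(1) x] .
    obtain j :: int where j: "x \<otimes> a [^] i \<otimes> b [^] j \<in> orth b"
      using exists_pow_mult_in_orth[OF b_carrier, of "x \<otimes> a [^] i"] x a(1) by auto
    have "x \<otimes> a [^] i \<otimes> b [^] j \<in> orth a"
      using i b(1) a(1) orth_int_pow_closed subgroup.m_closed[OF orth_a] by blast
    then have "x \<otimes> a [^] i \<otimes> b [^] j = \<one>"
      using j orth_inter_orth_trivial[OF odd_order a b] by blast
    then have "x = a [^] (- i) \<otimes> b [^] (- j)"
      using x a(1) b_carrier by (intro mult_int_pow_mult_int_pow_eq_oneD)
    then show ?thesis
      by blast
  qed
  have indep: "a [^] i = \<one>" if "a [^] (i::int) \<otimes> b [^] (j::int) = \<one>" for i j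
  proof -
    have "inv (b [^] j) = a [^] i"
      using that a(1) b_carrier by (intro inv_equality) simp_all
    moreover have "inv (b [^] j) \<in> orth a"
      using b(1) a(1) orth_int_pow_closed subgroup.m_inv_closed[OF orth_a] by blast
    ultimately show ?thesis
      using orth_self_int_pow_trivial[OF a(1)] by simp
  qed
  have "G \<cong> integer_mod_group (ord a) \<times>\<times> integer_mod_group (ord b)"
    using span indep by (rule iso_DirProd_integer_mod_group[OF finite_carrier a(1) b_carrier])
  with a(1) b_carrier ab a(2)[OF b_carrier] show ?thesis
    by (rule that)
qed

lemma exists_diagonal_pair:
  assumes p: "Factorial_Ring.prime p" "odd p"
    and g: "g1 \<in> carrier G" "g2 \<in> carrier G" "ord g1 = p" "ord g2 = p" and orth: "lam g1 g2 \<in> \<int>"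
  obtains h1 h2 and \<beta> :: int where "h1 \<in> carrier G" "h2 \<in> carrier G" "h1 [^] p = \<one>" "h2 [^] p = \<one>"
    "lam h1 h2 \<in> \<int>" "lam h1 h1 =\<^sub>\<int> 1 / of_nat p" "lam h2 h2 =\<^sub>\<int> of_int \<beta> / of_nat p" "\<not> int p dvd \<beta>"
proof -
  have p_pos: "0 < p"
    using prime_gt_0_nat[OF p(1)] .
  obtain \<alpha>1 where \<alpha>1: "lam g1 g1 = of_int \<alpha>1 / of_nat p" "\<not> int p dvd \<alpha>1"
    using lam_self_prime_ord[OF g(1) g(3) p(1)] .
  obtain \<alpha>2 where \<alpha>2: "lam g2 g2 = of_int \<alpha>2 / of_nat p" "\<not> int p dvd \<alpha>2"
    using lam_self_prime_ord[OF g(2) g(4) p(1)] .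
  obtain x y where "[\<alpha>1 * x^2 + \<alpha>2 * y^2 = 1] (mod int p)"
    using binary_form_represents_mod_prime[of "int p" \<alpha>1 \<alpha>2] p \<alpha>1(2) \<alpha>2(2) by auto
  then obtain t where "\<alpha>1 * x^2 + \<alpha>2 * y^2 = 1 + int p * t"
    by (metis cong_iff_dvd_diff dvdE diff_eq_eq add.commute)
  then have sum: "\<alpha>1 * x * x + \<alpha>2 * y * y = 1 + int p * t"
    by (simp add: power2_eq_square)
  have "lam g1 g1 =\<^sub>\<int> of_int \<alpha>1 / of_nat p" "lam g2 g2 =\<^sub>\<int> of_int \<alpha>2 / of_nat p"
    using \<alpha>1 \<alpha>2 by simp_all
  note rescale = diagonal_rescale[OF g(1,2) orth p_pos this sum]
  let ?T = "{x \<in> carrier G. x [^] p = \<one>}"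
  have "g1 \<in> ?T" "g2 \<in> ?T"
    using pow_ord_eq_1[OF g(1)] pow_ord_eq_1[OF g(2)] g(1,2) by (simp_all only: g(3,4) mem_Collect_eq)
  then have "g1 [^] x \<otimes> g2 [^] y \<in> ?T" "g1 [^] (- \<alpha>2 * y) \<otimes> g2 [^] (\<alpha>1 * x) \<in> ?T"
    by (intro subgroup.m_closed[OF subgroup_torsion] subgroup_int_pow_closed[OF subgroup_torsion]; simp)+
  moreover have "\<not> int p dvd \<alpha>1 * \<alpha>2"
    using p(1) \<alpha>1(2) \<alpha>2(2) by (simp add: prime_dvd_mult_iff)
  ultimately show ?thesis
    by (intro that[OF _ _ _ _ rescale(2,1,3)]) simp_all
qed

lemma diagonal_nonresidue:
  assumes p: "Factorial_Ring.prime p" "[p = 1] (mod 4)"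
    and u: "u \<in> carrier G" and v: "v \<in> carrier G" and orth: "lam u v \<in> \<int>"
    and uu: "lam u u =\<^sub>\<int> 1 / of_nat p" and vv: "lam v v =\<^sub>\<int> of_int \<beta> / of_nat p"
    and \<beta>: "\<not> int p dvd \<beta>"
  shows "\<not> QuadRes (int p) \<beta>"
proof
  assume "QuadRes (int p) \<beta>"
  then obtain t where t: "[t^2 = \<beta>] (mod int p)"
    unfolding QuadRes_def by blast
  obtain i where i: "[i^2 = -1] (mod int p)"
    using minus_one_square_mod_prime[OF p] .
  have p_pos: "0 < p"
    using prime_gt_0_nat[OF p(1)] .
  have uu': "lam u u =\<^sub>\<int> of_int 1 / of_nat p"
    using uu by simp
  have "[1 * (i * t) * (i * t) + \<beta> * 1 * 1 = (-1) * \<beta> + \<beta>] (mod int p)"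
    using cong_add[OF cong_mult[OF i t] cong_refl[of \<beta>]] by (simp add: power2_eq_square mult_ac)
  then have "int p dvd 1 * (i * t) * (i * t) + \<beta> * 1 * 1"
    by (simp add: cong_0_iff)
  then have "(of_int (1 * (i * t) * (i * t) + \<beta> * 1 * 1) / of_nat p :: rat) \<in> \<int>"
    using of_int_div_of_nat_in_Ints_iff[OF p_pos] by blast
  then have "lam (u [^] (i * t) \<otimes> v [^] (1::int)) (u [^] (i * t) \<otimes> v [^] (1::int)) \<in> \<int>"
    using eq_QZ_Ints_iff[OF lam_diagonal[OF u v orth p_pos uu' vv]] by blast
  then have "u [^] (i * t) \<otimes> v [^] (1::int) = \<one>"
    by (rule anisotropic[rotated]) (use u v in simp)
  moreover have "\<not> int p dvd 1"
    using prime_gt_1_nat[OF p(1)] by simp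
  ultimately show False
    using diagonal_independent[OF u v orth p(1) uu' vv _ \<beta>] by blast
qed

lemma nonresidue_diagonal_basis_of_orthogonal_pair:
  assumes p: "Factorial_Ring.prime p" "[p = 1] (mod 4)"
    and g: "g1 \<in> carrier G" "g2 \<in> carrier G" "ord g1 = p" "ord g2 = p" and orth: "lam g1 g2 \<in> \<int>"
  shows "nonresidue_diagonal_basis G lam p"
proof -
  have p_pos: "0 < p"
    using prime_gt_0_nat[OF p(1)] .
  have "odd p"
    using p(2) by (simp add: cong_def) presburger
  obtain h1 h2 and \<beta> :: int where h: "h1 \<in> carrier G" "h2 \<in> carrier G" "h1 [^] p = \<one>" "h2 [^] p = \<one>"
    and h12: "lam h1 h2 \<in> \<int>" and h11: "lam h1 h1 =\<^sub>\<int> 1 / of_nat p"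
    and h22: "lam h2 h2 =\<^sub>\<int> of_int \<beta> / of_nat p" and \<beta>: "\<not> int p dvd \<beta>"
    using exists_diagonal_pair[OF p(1) \<open>odd p\<close> g orth] by blast
  have h11': "lam h1 h1 =\<^sub>\<int> of_int 1 / of_nat p"
    using h11 by simp
  have "\<not> int p dvd 1"
    using prime_gt_1_nat[OF p(1)] by simp
  note indep = diagonal_independent[OF h(1,2) h12 p(1) h11' h22 this \<beta>]
  have "h1 \<noteq> \<one>" "h2 \<noteq> \<one>"
    using indep[of 1 0] indep[of 0 1] h(1,2) prime_gt_1_nat[OF p(1)] by auto
  then have ord_h: "ord h1 = p" "ord h2 = p"
    using ord_eq_prime[OF p(1)] h by blast+
  have "is_basis2 G p (sylow_part G p) h1 h2"
  proof (rule is_basis2_sylow_partI[OF p_pos h indep])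
    fix z assume "z \<in> sylow_part G p"
    then have "z \<in> carrier G" "z [^] p = \<one>"
      using sylow_part_eq[OF p(1)] by auto
    then show "\<exists>(e1::int) (e2::int). z = h1 [^] e1 \<otimes> h2 [^] e2"
      using prime_torsion_spanned[OF p(1) \<open>odd p\<close> h(1,2) ord_h h12] by metis
  qed
  moreover have "lam (h1 [^] e1 \<otimes> h2 [^] e2) (h1 [^] e1 \<otimes> h2 [^] e2)
      - of_int (e1^2 + \<beta> * e2^2) / of_nat p \<in> \<int>" for e1 e2 :: int
    using lam_diagonal[OF h(1,2) h12 p_pos h11' h22, of e1 e2 e1 e2]
    by (simp add: eq_QZ_def power2_eq_square mult_ac)
  ultimately show ?thesis
    unfolding nonresidue_diagonal_basis_def
    using diagonal_nonresidue[OF p h(1,2) h12 h11 h22 \<beta>] by blast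
qed

lemma anisotropic_normal_formI:
  assumes odd_order: "odd (order G)"
    and primes_1_mod_4: "\<And>p. Factorial_Ring.prime p \<Longrightarrow> p dvd order G \<Longrightarrow> [p = 1] (mod 4)"
  shows "anisotropic_normal_form G lam"
proof -
  obtain a b where a: "a \<in> carrier G" and b: "b \<in> carrier G" and ab: "lam a b \<in> \<int>"
    and "ord b dvd ord a" and "G \<cong> integer_mod_group (ord a) \<times>\<times> integer_mod_group (ord b)"
    using orthogonal_cyclic_decomposition[OF odd_order] by blast
  moreover have "[p = 1] (mod 4)" if "Factorial_Ring.prime p" "p dvd ord a" for p
    using that primes_1_mod_4 ord_dvd_group_order[OF a] dvd_trans by blast
  moreover have "nonresidue_diagonal_basis G lam p" if p: "Factorial_Ring.prime p" "p dvd ord b" for p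
  proof (rule nonresidue_diagonal_basis_of_orthogonal_pair)
    have "p dvd ord a"
      using p(2) \<open>ord b dvd ord a\<close> by (rule dvd_trans)
    then show "ord (a [^] (ord a div p)) = p" "ord (b [^] (ord b div p)) = p"
      using ord_pow_ord_div[OF finite_carrier] a b p(2) by simp_all
    show "[p = 1] (mod 4)"
      using p primes_1_mod_4 ord_dvd_group_order[OF b] dvd_trans by blast
  qed (use a b ab p in \<open>simp_all add: lam_nat_pow_nat_pow_Ints\<close>)
  ultimately show ?thesis
    unfolding anisotropic_normal_form_def using ord_pos[OF a] squarefree_ord[OF a] by blast
qed

end

section \<open>Forms on a product of two cyclic groups\<close>

context QZ_form
begin

(* As p is prime to n/p, w = w^(p*u) * w' with w'^p = 1; the first factor pairs integrally
   with y because y^p = 1, and w' is a power of y. *)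
lemma lam_Ints_if_prime_torsion_cyclic:
  fixes n p :: nat
  assumes exponent: "\<And>w. w \<in> carrier G \<Longrightarrow> w [^] n = \<one>"
    and p: "p dvd n" "coprime p (n div p)"
    and y: "y \<in> carrier G" "y [^] p = \<one>" "lam y y \<in> \<int>"
    and cyclic: "\<And>z. z \<in> carrier G \<Longrightarrow> z [^] p = \<one> \<Longrightarrow> \<exists>k::nat. z = y [^] k"
    and w: "w \<in> carrier G"
  shows "lam y w \<in> \<int>"
proof -
  obtain u where "[int p * u = 1] (mod int (n div p))"
    using p(2) cong_solve_coprime_int[of "int p" "int (n div p)"] by auto
  then have "int (n div p) dvd 1 - int p * u"
    by (simp add: cong_iff_dvd_diff dvd_diff_commute)
  then have "int n dvd (1 - int p * u) * int p"
    using p(1) by (metis dvd_div_mult_self mult_dvd_mono dvd_refl of_nat_mult)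
  moreover have "int (ord w) dvd int n"
    using exponent[OF w] w by (simp add: pow_eq_id)
  ultimately have "int (ord w) dvd (1 - int p * u) * int p"
    by (rule dvd_trans[rotated])
  then have "(w [^] (1 - int p * u)) [^] int p = \<one>"
    using w by (simp add: int_pow_eq_id int_pow_pow)
  then have "(w [^] (1 - int p * u)) [^] p = \<one>"
    by (simp add: int_pow_int)
  then obtain k :: nat where k: "w [^] (1 - int p * u) = y [^] k"
    using cyclic w by blast
  have "w = w [^] (int p * u) \<otimes> w [^] (1 - int p * u)"
    using w by (simp flip: int_pow_mult)
  then have "lam y w = lam y (w [^] (int p * u) \<otimes> y [^] int k)"
    using k by (simp add: int_pow_int)
  also have "\<dots> =\<^sub>\<int> lam y (w [^] (int p * u)) + lam y (y [^] int k)"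
    using w y(1) by (intro lam_mult_right) simp_all
  also have "\<dots> =\<^sub>\<int> of_int (int p * u) * lam y w + of_int (int k) * lam y y"
    using w y(1) by (intro eq_QZ_add lam_int_pow_right)
  also have "\<dots> = of_int u * (of_nat p * lam y w) + of_nat k * lam y y"
    by simp
  finally show ?thesis
    using lam_pow_eq_one[OF y(1) w y(2)] y(3) by (simp add: eq_QZ_def)
qed

lemma trivial_if_nonresidue_diagonal_basis:
  assumes basis: "nonresidue_diagonal_basis G lam p"
    and p: "Factorial_Ring.prime p" "[p = 1] (mod 4)"
    and y: "y \<in> sylow_part G p" "lam y y \<in> \<int>"
  shows "y = \<one>"
proof -
  have p_pos: "0 < p"
    using prime_gt_0_nat[OF p(1)] .
  obtain g1 g2 and \<beta> :: int where b: "is_basis2 G p (sylow_part G p) g1 g2" "\<not> QuadRes (int p) \<beta>"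
    and diagonal: "\<And>e1 e2 :: int. lam (g1 [^] e1 \<otimes> g2 [^] e2) (g1 [^] e1 \<otimes> g2 [^] e2)
      - of_int (e1^2 + \<beta> * e2^2) / of_nat p \<in> \<int>"
    using basis unfolding nonresidue_diagonal_basis_def by blast
  have "y \<in> (\<lambda>(e1, e2). g1 [^] e1 \<otimes> g2 [^] e2) ` ({0..<p} \<times> {0..<p})"
    using b(1) y(1) unfolding is_basis2_def bij_betw_def by simp
  then obtain e1 e2 :: nat where e: "e1 < p" "e2 < p" "y = g1 [^] e1 \<otimes> g2 [^] e2"
    by auto
  have "lam y y - of_int (int e1^2 + \<beta> * int e2^2) / of_nat p \<in> \<int>"
    using diagonal[of "int e1" "int e2"] by (simp add: e(3) int_pow_int)
  then have "(of_int (int e1^2 + \<beta> * int e2^2) / of_nat p :: rat) \<in> \<int>"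
    using y(2) by simp
  then have "[int e1^2 + \<beta> * int e2^2 = 0] (mod int p)"
    using of_int_div_of_nat_in_Ints_iff[OF p_pos, of "int e1^2 + \<beta> * int e2^2"] by (simp add: cong_0_iff)
  moreover obtain i where "[i^2 = -1] (mod int p)"
    using minus_one_square_mod_prime[OF p] .
  ultimately have "int p dvd int e1 \<and> int p dvd int e2"
    using p(1) b(2) by (intro nonresidue_binary_form_anisotropic) auto
  then have "e1 = 0" "e2 = 0"
    using e(1,2) by (auto dest: dvd_imp_le)
  then show ?thesis
    using e(3) by simp
qed

lemma no_isotropic_prime_ord_if_anisotropic_normal_form:
  assumes fin: "finite (carrier G)" and nondeg: "nondegenerate_QZ G lam"
    and normal_form: "anisotropic_normal_form G lam"
    and p: "Factorial_Ring.prime p" and y: "y \<in> carrier G" "ord y = p" "lam y y \<in> \<int>"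
  shows False
proof -
  obtain q' q where q': "0 < q'" "squarefree q'" "\<And>p. Factorial_Ring.prime p \<Longrightarrow> p dvd q' \<Longrightarrow> [p = 1] (mod 4)"
    and q: "q dvd q'" and iso: "G \<cong> integer_mod_group q' \<times>\<times> integer_mod_group q"
    and bases: "\<And>p. Factorial_Ring.prime p \<Longrightarrow> p dvd q \<Longrightarrow> nonresidue_diagonal_basis G lam p"
    using normal_form unfolding anisotropic_normal_form_def by blast
  have y_p: "y [^] p = \<one>" and y_ne: "y \<noteq> \<one>"
    using y pow_ord_eq_1[OF y(1)] prime_gt_1_nat[OF p] by auto
  have exponent: "w [^] q' = \<one>" if "w \<in> carrier G" for w
    using pow_eq_one_of_iso_integer_mod_group_DirProd[OF iso q that] .
  then have "p dvd q'"
    using y(1,2) pow_eq_id[of y q'] by simp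
  show False
  proof (cases "p dvd q")
    case True
    have "y \<in> sylow_part G p"
      using y(1) y_p unfolding sylow_part_def by (auto intro: exI[of _ 1])
    then show False
      using trivial_if_nonresidue_diagonal_basis[OF bases[OF p True] p q'(3)[OF p \<open>p dvd q'\<close>]] y(3) y_ne
      by blast
  next
    case False
    have "0 < q"
      using q q'(1) by (cases q) auto
    have "lam y w \<in> \<int>" if "w \<in> carrier G" for w
      using exponent \<open>p dvd q'\<close> squarefree_coprime_div_prime[OF q'(2) p \<open>p dvd q'\<close>] y(1) y_p y(3)
        prime_torsion_cyclic[OF fin iso q'(1) \<open>0 < q\<close> p \<open>p dvd q'\<close> False y(1,2)] that
      by (rule lam_Ints_if_prime_torsion_cyclic)
    then show False
      using nondeg y(1) y_ne unfolding nondegenerate_QZ_def by blast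
  qed
qed

lemma isotropic_set_trivial_if_anisotropic_normal_form:
  assumes fin: "finite (carrier G)" and nondeg: "nondegenerate_QZ G lam"
    and normal_form: "anisotropic_normal_form G lam"
  shows "isotropic_set G lam = {\<one>}"
proof -
  have "x = \<one>" if x: "x \<in> carrier G" "lam x x \<in> \<int>" for x
  proof (rule ccontr)
    assume "x \<noteq> \<one>"
    then obtain p where p: "Factorial_Ring.prime p" "p dvd ord x" "ord (x [^] (ord x div p)) = p"
      using exists_prime_ord_pow[OF fin x(1)] by blast
    have "lam (x [^] (ord x div p)) (x [^] (ord x div p)) \<in> \<int>"
      using lam_nat_pow_nat_pow_Ints[OF x(1) x(1) x(2)] .
    then show False
      by (rule no_isotropic_prime_ord_if_anisotropic_normal_form[OF fin nondeg normal_form p(1)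
            nat_pow_closed[OF x(1)] p(3)])
  qed
  moreover have "lam \<one> \<one> \<in> \<int>"
    by (simp add: lam_one_left)
  ultimately show ?thesis
    unfolding isotropic_set_def by auto
qed

end

theorem mainTheorem3:
  fixes G :: "('a, 'b) monoid_scheme" and lam :: "'a \<Rightarrow> 'a \<Rightarrow> rat"
  assumes "comm_group G"
    and "finite (carrier G)"
    and "odd (order G)"
    and "\<forall>m::nat. m dvd order G \<longrightarrow> m mod 4 \<noteq> 3"
    and "sym_bilinear_QZ G lam"
    and "nondegenerate_QZ G lam"
  shows "isotropic_set G lam = {\<one>\<^bsub>G\<^esub>} \<longleftrightarrow>
    (\<exists>q' q :: nat.
       q' > 0 \<and> squarefree q' \<and> (\<forall>p. Factorial_Ring.prime p \<and> p dvd q' \<longrightarrow> [p = 1] (mod 4)) \<and>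
       q dvd q' \<and>
       G \<cong> (integer_mod_group q' \<times>\<times> integer_mod_group q) \<and>
       (\<forall>p::nat. Factorial_Ring.prime p \<and> p dvd q \<longrightarrow>
          (\<exists>g1 g2 (\<beta>::int). is_basis2 G p (sylow_part G p) g1 g2 \<and>
             \<not> QuadRes (int p) \<beta> \<and>
             (\<forall>e1 e2 :: int.
                lam (g1 [^]\<^bsub>G\<^esub> e1 \<otimes>\<^bsub>G\<^esub> g2 [^]\<^bsub>G\<^esub> e2)
                    (g1 [^]\<^bsub>G\<^esub> e1 \<otimes>\<^bsub>G\<^esub> g2 [^]\<^bsub>G\<^esub> e2)
                - of_int (e1^2 + \<beta> * e2^2) / of_nat p \<in> \<int>))))"
proof -
  interpret QZ_form G lam
    using assms(1,5) by (simp add: QZ_form_def QZ_form_axioms_def)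
  have primes_1_mod_4: "[p = 1] (mod 4)" if "Factorial_Ring.prime p" "p dvd order G" for p
  proof -
    have "odd p"
      using assms(3) that(2) dvd_trans[of 2 p "order G"] by auto
    moreover have "p mod 4 \<noteq> 3"
      using assms(4) that(2) by blast
    ultimately show ?thesis
      unfolding cong_def by presburger
  qed
  have "isotropic_set G lam = {\<one>\<^bsub>G\<^esub>} \<longleftrightarrow> anisotropic_normal_form G lam"
  proof
    assume "isotropic_set G lam = {\<one>\<^bsub>G\<^esub>}"
    then interpret anisotropic_QZ_form G lam
      using assms(2) by unfold_locales
    show "anisotropic_normal_form G lam"
      using assms(3) primes_1_mod_4 by (rule anisotropic_normal_formI)
  qed (rule isotropic_set_trivial_if_anisotropic_normal_form[OF assms(2,6)])
  then show ?thesis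
    unfolding anisotropic_normal_form_def nonresidue_diagonal_basis_def .
qed

end
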